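(* If $\eta$ is a probability measure, then $\tau(K)\le\eta(K)$ for every closed set $K\subset\mathbb{X}$.
   Context: $\mathbb{X}$ is a compact metric space. $(\xi_j)_{j\in\mathbb N}$ is a sequence of finitely additive outer probabilities on $\mathbb{X}$ (set functions on all subsets, values in $[0,1]$, finitely additive, $\xi_j(\mathbb{X})=1$). For $A\subset\mathbb{X}$, $\tau(A)=\limsup_{n\to\infty}\frac1n\sum_{j=0}^{n-1}\xi_j(A)$. For $Y\subset\mathbb{X}$, $r>0$, $\nu_r(Y)=\inf\sum_{I\in\mathcal I}\tau(I)$ over countable covers $\mathcal I$ of $Y$ by open sets of diameter $\le r$; $\nu(Y)=\sup_{r>0}\nu_r(Y)$; $\eta$ is the restriction of $\nu$ to Borel sets. *)

theory Defs
  imports "HOL-Analysis.Analysis"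
begin

definition fa_outer_prob :: "('a set \<Rightarrow> real) \<Rightarrow> bool" where
  "fa_outer_prob \<xi> \<longleftrightarrow>
     (\<forall>A. 0 \<le> \<xi> A \<and> \<xi> A \<le> 1) \<and>
     (\<forall>A B. A \<inter> B = {} \<longrightarrow> \<xi> (A \<union> B) = \<xi> A + \<xi> B) \<and>
     \<xi> UNIV = 1"

definition tau :: "(nat \<Rightarrow> 'a set \<Rightarrow> real) \<Rightarrow> 'a set \<Rightarrow> ereal" where
  "tau \<xi> A = limsup (\<lambda>n. ereal ((1 / real n) * (\<Sum>j<n. \<xi> j A)))"

definition nu_r :: "(nat \<Rightarrow> 'a::metric_space set \<Rightarrow> real) \<Rightarrow> real \<Rightarrow> 'a set \<Rightarrow> ennreal" where
  "nu_r \<xi> r Y = (INF I \<in> {I :: nat \<Rightarrow> 'a set.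
                      (\<forall>n. open (I n) \<and> diameter (I n) \<le> r) \<and> Y \<subseteq> (\<Union>n. I n)}.
                   (\<Sum>n. e2ennreal (tau \<xi> (I n))))"

definition nu :: "(nat \<Rightarrow> 'a::metric_space set \<Rightarrow> real) \<Rightarrow> 'a set \<Rightarrow> ennreal" where
  "nu \<xi> Y = (SUP r \<in> {r::real. r > 0}. nu_r \<xi> r Y)"

end

theory Submission
  imports Defs
begin

text \<open>
  A closed subset K of a compact space is compact, so every open cover of K used in the
  definition of \<open>\<nu>\<^sub>r(K)\<close> has a finite subcover. Each \<open>\<xi>\<^sub>j\<close> is finitely subadditive.
\<close>

lemma fa_outer_prob_empty:
  assumes "fa_outer_prob p" shows "p {} = 0"
proof -
  have "p {} = p {} + p {}"
    using assms unfolding fa_outer_prob_def by (metis Un_empty inf_bot_left)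
  then show ?thesis by simp
qed

lemma fa_outer_prob_mono:
  assumes "fa_outer_prob p" "A \<subseteq> B" shows "p A \<le> p B"
proof -
  have "p B = p A + p (B - A)"
    using assms unfolding fa_outer_prob_def by (metis Diff_disjoint Diff_partition)
  moreover have "0 \<le> p (B - A)" using assms(1) unfolding fa_outer_prob_def by blast
  ultimately show ?thesis by linarith
qed

lemma fa_outer_prob_Un_le:
  assumes "fa_outer_prob p" shows "p (A \<union> B) \<le> p A + p B"
proof -
  have "p (A \<union> B) = p A + p (B - A)"
    using assms unfolding fa_outer_prob_def by (metis Diff_disjoint Un_Diff_cancel)
  moreover have "p (B - A) \<le> p B" using fa_outer_prob_mono[OF assms] by blast
  ultimately show ?thesis by linarith
qed

lemma fa_outer_prob_UNION_le:
  assumes "fa_outer_prob p" "finite F"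
  shows "p (\<Union>i\<in>F. I i) \<le> (\<Sum>i\<in>F. p (I i))"
  using assms(2)
proof (induction F rule: finite_induct)
  case empty
  then show ?case using fa_outer_prob_empty[OF assms(1)] by simp
next
  case (insert x F)
  have "p (\<Union>i\<in>insert x F. I i) \<le> p (I x) + p (\<Union>i\<in>F. I i)"
    using fa_outer_prob_Un_le[OF assms(1)] by simp
  with insert show ?case by simp
qed

lemma limsup_sum_le:
  fixes u :: "'b \<Rightarrow> nat \<Rightarrow> ereal"
  assumes "finite F"
  shows "limsup (\<lambda>n. \<Sum>i\<in>F. u i n) \<le> (\<Sum>i\<in>F. limsup (u i))"
  using assms
proof (induction F rule: finite_induct)
  case empty
  then show ?case by (simp add: Limsup_const)
next
  case (insert x F)
  have "limsup (\<lambda>n. \<Sum>i\<in>insert x F. u i n) = limsup (\<lambda>n. u x n + (\<Sum>i\<in>F. u i n))"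
    using insert by simp
  also have "\<dots> \<le> limsup (u x) + limsup (\<lambda>n. \<Sum>i\<in>F. u i n)"
    by (rule ereal_limsup_add_mono)
  also have "\<dots> \<le> limsup (u x) + (\<Sum>i\<in>F. limsup (u i))"
    using insert by (simp add: add_left_mono)
  finally show ?case using insert by simp
qed

lemma tau_nonneg:
  assumes "\<And>j. fa_outer_prob (\<xi> j)"
  shows "0 \<le> tau \<xi> A"
proof -
  have "\<And>n. 0 \<le> ereal ((1 / real n) * (\<Sum>j<n. \<xi> j A))"
    using assms unfolding fa_outer_prob_def by (simp add: sum_nonneg)
  then have "limsup (\<lambda>n. 0::ereal) \<le> tau \<xi> A"
    unfolding tau_def by (intro Limsup_mono) auto
  then show ?thesis by (simp add: Limsup_const)
qed

lemma tau_le_sum_of_cover: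
  assumes "\<And>j. fa_outer_prob (\<xi> j)" "finite F" "K \<subseteq> (\<Union>i\<in>F. I i)"
  shows "tau \<xi> K \<le> (\<Sum>i\<in>F. tau \<xi> (I i))"
proof -
  have average_le: "ereal ((1 / real n) * (\<Sum>j<n. \<xi> j K))
      \<le> (\<Sum>i\<in>F. ereal ((1 / real n) * (\<Sum>j<n. \<xi> j (I i))))" for n
  proof -
    have "\<xi> j K \<le> (\<Sum>i\<in>F. \<xi> j (I i))" for j
      using fa_outer_prob_mono[OF assms(1) assms(3)] fa_outer_prob_UNION_le[OF assms(1,2)]
      by (meson order_trans)
    then have "(\<Sum>j<n. \<xi> j K) \<le> (\<Sum>j<n. \<Sum>i\<in>F. \<xi> j (I i))" by (intro sum_mono)
    then have "(1 / real n) * (\<Sum>j<n. \<xi> j K) \<le> (1 / real n) * (\<Sum>j<n. \<Sum>i\<in>F. \<xi> j (I i))"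
      by (intro mult_left_mono) auto
    also have "\<dots> = (\<Sum>i\<in>F. (1 / real n) * (\<Sum>j<n. \<xi> j (I i)))"
      by (simp add: sum_distrib_left sum.swap[of _ "{..<n}"])
    finally show ?thesis by (simp add: sum_ereal)
  qed
  have "tau \<xi> K \<le> limsup (\<lambda>n. \<Sum>i\<in>F. ereal ((1 / real n) * (\<Sum>j<n. \<xi> j (I i))))"
    unfolding tau_def using average_le by (intro Limsup_mono) auto
  also have "\<dots> \<le> (\<Sum>i\<in>F. tau \<xi> (I i))"
    unfolding tau_def by (rule limsup_sum_le[OF assms(2)])
  finally show ?thesis .
qed

lemma tau_le_nu_r_compact:
  assumes "\<And>j. fa_outer_prob (\<xi> j)" "compact K"
  shows "e2ennreal (tau \<xi> K) \<le> nu_r \<xi> r K"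
  unfolding nu_r_def
proof (rule INF_greatest)
  fix I :: "nat \<Rightarrow> 'a set"
  assume "I \<in> {I. (\<forall>n. open (I n) \<and> diameter (I n) \<le> r) \<and> K \<subseteq> (\<Union>n. I n)}"
  then have "\<And>n. open (I n)" "K \<subseteq> (\<Union>n. I n)" by auto
  then obtain F where F: "finite F" "K \<subseteq> (\<Union>i\<in>F. I i)"
    by (rule compactE_image[OF assms(2), of UNIV I]) auto
  have "tau \<xi> K \<le> (\<Sum>i\<in>F. tau \<xi> (I i))"
    by (rule tau_le_sum_of_cover[OF assms(1) F])
  also have "\<dots> = (\<Sum>i\<in>F. enn2ereal (e2ennreal (tau \<xi> (I i))))"
    using tau_nonneg[OF assms(1)] by (simp add: enn2ereal_e2ennreal)
  also have "\<dots> = enn2ereal (\<Sum>i\<in>F. e2ennreal (tau \<xi> (I i)))" by simp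
  finally have "e2ennreal (tau \<xi> K) \<le> e2ennreal (enn2ereal (\<Sum>i\<in>F. e2ennreal (tau \<xi> (I i))))"
    by (rule e2ennreal_mono)
  also have "\<dots> = (\<Sum>i\<in>F. e2ennreal (tau \<xi> (I i)))" by simp
  also have "\<dots> \<le> (\<Sum>n. e2ennreal (tau \<xi> (I n)))"
    by (rule sum_le_suminf) (auto simp: F(1))
  finally show "e2ennreal (tau \<xi> K) \<le> (\<Sum>n. e2ennreal (tau \<xi> (I n)))" .
qed

lemma nu_r_le_nu:
  assumes "0 < r" shows "nu_r \<xi> r Y \<le> nu \<xi> Y"
  unfolding nu_def using assms by (intro SUP_upper) auto

theorem mainTheorem15:
  fixes \<xi> :: "nat \<Rightarrow> 'a::metric_space set \<Rightarrow> real"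
  assumes "compact (UNIV :: 'a set)"
    and "\<And>j. fa_outer_prob (\<xi> j)"
    and "measure_space UNIV (sets borel) (nu \<xi>)"
    and "nu \<xi> UNIV = 1"
    and "closed K"
  shows "tau \<xi> K \<le> enn2ereal (nu \<xi> K)"
proof -
  have "compact K" using compact_Int_closed[OF assms(1,5)] by simp
  then have "e2ennreal (tau \<xi> K) \<le> nu \<xi> K"
    using tau_le_nu_r_compact[OF assms(2)] nu_r_le_nu[of 1] by (meson order_trans zero_less_one)
  then have "enn2ereal (e2ennreal (tau \<xi> K)) \<le> enn2ereal (nu \<xi> K)"
    by (simp add: less_eq_ennreal.rep_eq)
  then show ?thesis using tau_nonneg[OF assms(2)] by (simp add: enn2ereal_e2ennreal)
qed

end
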